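(* Every rigidity circuit $C$ has a resultant tree. That is, for every rigidity circuit $C$ with $n$ vertices there is a rooted binary tree $T_C$ with root $C$ such that: (a) every node of $T_C$ is a rigidity circuit; (b) every circuit at level $l$ of $T_C$ (the root being at level $0$) has at most $n-l$ vertices; (c) every internal node $C_i$ has exactly two children $C_j, C_k$, and there is a common edge $e\in E(C_j)\cap E(C_k)$ with $C_i=\mathrm{CR}(C_j,C_k,e)$; (d) every leaf is a complete graph $K_4$. In particular every rigidity circuit can be obtained from copies of $K_4$ by repeated combinatorial resultant operations.
   Context: All graphs are finite and simple; a graph is given by a set of edges, and its vertex set is the set of endpoints of its edges. A graph $G=(V,E)$ is $(2,3)$-sparse if every subset $V'\subseteq V$ with $|V'|\ge 2$ spans at most $2|V'|-3$ edges. A Laman graph is a $(2,3)$-sparse graph with $|E|=2|V|-3$. A rigidity circuit (also called sparsity circuit) is a graph $C=(V,E)$ with $|E|=2|V|-2$ such that every proper subset $V'\subsetneq V$ with $|V'|\ge 2$ spans at most $2|V'|-3$ edges; equivalently, a minimal edge set which is not $(2,3)$-sparse (a circuit of the $(2,3)$-sparsity matroid on the edges of $K_n$). Combinatorial resultant: for two distinct graphs $G_1=(V_1,E_1)$, $G_2=(V_2,E_2)$ and a common edge $e\in E_1\cap E_2$, $\mathrm{CR}(G_1,G_2,e)$ is the graph with vertex set $V_1\cup V_2$ and edge set $(E_1\cup E_2)\setminus\{e\}$. *)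

theory Defs
  imports Main
begin

text \<open>A (finite, simple) graph is given by its edge set: a finite set of
  2-element vertex sets. Its vertex set is the set of endpoints of edges.\<close>

definition graph :: "'a set set \<Rightarrow> bool" where
  "graph E \<longleftrightarrow> finite E \<and> (\<forall>e\<in>E. card e = 2)"

definition verts :: "'a set set \<Rightarrow> 'a set" where
  "verts E = \<Union>E"

definition span :: "'a set set \<Rightarrow> 'a set \<Rightarrow> 'a set set" where
  "span E V' = {e \<in> E. e \<subseteq> V'}"

definition rigidity_circuit :: "'a set set \<Rightarrow> bool" where
  "rigidity_circuit E \<longleftrightarrow> graph E \<and>
     int (card E) = 2 * int (card (verts E)) - 2 \<and>
     (\<forall>V'. V' \<subset> verts E \<and> card V' \<ge> 2 \<longrightarrow>
        int (card (span E V')) \<le> 2 * int (card V') - 3)"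

definition is_K4 :: "'a set set \<Rightarrow> bool" where
  "is_K4 E \<longleftrightarrow> (\<exists>V. card V = 4 \<and> E = {{x, y} | x y. x \<in> V \<and> y \<in> V \<and> x \<noteq> y})"

definition CR :: "'a set set \<Rightarrow> 'a set set \<Rightarrow> 'a set \<Rightarrow> 'a set \<times> 'a set set" where
  "CR E1 E2 e = (verts E1 \<union> verts E2, (E1 \<union> E2) - {e})"

datatype 'a rtree = Leaf "'a set set" | Node "'a set set" "'a rtree" "'a rtree"

fun root :: "'a rtree \<Rightarrow> 'a set set" where
  "root (Leaf G) = G"
| "root (Node G _ _) = G"

text \<open>resultant_tree n l T: T, placed at level l, satisfies conditions (a)--(d)
  for a root circuit with n vertices.\<close>
fun resultant_tree :: "nat \<Rightarrow> nat \<Rightarrow> 'a rtree \<Rightarrow> bool" where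
  "resultant_tree n l (Leaf G) \<longleftrightarrow>
     rigidity_circuit G \<and> card (verts G) + l \<le> n \<and> is_K4 G"
| "resultant_tree n l (Node G T1 T2) \<longleftrightarrow>
     rigidity_circuit G \<and> card (verts G) + l \<le> n \<and>
     root T1 \<noteq> root T2 \<and>
     (\<exists>e \<in> root T1 \<inter> root T2. (verts G, G) = CR (root T1) (root T2) e) \<and>
     resultant_tree n (Suc l) T1 \<and> resultant_tree n (Suc l) T2"

end

theory Submission
  imports Defs
begin

text \<open>Call a vertex set X of a circuit C tight if it spans 2|X| - 3 edges. Tight sets
  meeting in at least two vertices have tight union and intersection (if the union is a
  proper subset), by supermodularity of the span count. A circuit with at least five
  vertices has two non-adjacent vertices v, w of degree 3; removing one of them leaves a
  tight set, removing both leaves a non-tight set W, so some pair x, y in W is not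
  contained in any tight subset of W. Let T be a minimal tight set containing x, y that
  avoids v, and S one that avoids w. Then T and S together cover all vertices and all
  edges of C, and adding the non-edge xy to the span of each of them gives two smaller
  circuits whose combinatorial resultant along xy is C. Induction on the number of
  vertices, with base case K4, builds the tree.\<close>

definition tight :: "'a set set \<Rightarrow> 'a set \<Rightarrow> bool" where
  "tight E X \<longleftrightarrow> int (card (span E X)) = 2 * int (card X) - 3"

definition degree :: "'a set set \<Rightarrow> 'a \<Rightarrow> nat" where
  "degree E u = card {f\<in>E. u \<in> f}"

lemma two_le_card: "finite A \<Longrightarrow> a \<in> A \<Longrightarrow> b \<in> A \<Longrightarrow> a \<noteq> b \<Longrightarrow> 2 \<le> card A"
  using card_le_Suc0_iff_eq[of A] by fastforce

lemma graph_finite: "graph E \<Longrightarrow> finite E"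
  by (simp add: graph_def)

lemma graph_card_edge: "graph E \<Longrightarrow> f \<in> E \<Longrightarrow> card f = 2"
  by (simp add: graph_def)

lemma edge_subset_verts: "f \<in> E \<Longrightarrow> f \<subseteq> verts E"
  by (auto simp: verts_def)

lemma finite_verts: "graph E \<Longrightarrow> finite (verts E)"
  unfolding verts_def graph_def by (metis card.infinite finite_Union zero_neq_numeral)

lemma span_verts: "span E (verts E) = E"
  using edge_subset_verts by (auto simp: span_def)

lemma span_subset: "span E X \<subseteq> E"
  by (auto simp: span_def)

lemma span_Int: "span E (X \<inter> Y) = span E X \<inter> span E Y"
  by (auto simp: span_def)

lemma finite_span: "finite E \<Longrightarrow> finite (span E X)"
  using span_subset finite_subset by metis

lemma card_span_Un_Int:
  assumes "finite E"
  shows "card (span E X) + card (span E Y) + card (span E (X \<union> Y) - (span E X \<union> span E Y))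
      = card (span E (X \<union> Y)) + card (span E (X \<inter> Y))"
proof -
  have fin: "finite (span E Z)" for Z using finite_span[OF assms] .
  have sub: "span E X \<union> span E Y \<subseteq> span E (X \<union> Y)" by (auto simp: span_def)
  have "card (span E (X \<union> Y))
      = card (span E X \<union> span E Y) + card (span E (X \<union> Y) - (span E X \<union> span E Y))"
    using card_Diff_subset[OF _ sub] card_mono[OF fin sub] fin
    by (metis add_diff_inverse_nat finite_Un not_less)
  moreover have "card (span E X \<union> span E Y) + card (span E X \<inter> span E Y)
      = card (span E X) + card (span E Y)"
    using card_Un_Int[OF fin fin] by simp
  ultimately show ?thesis unfolding span_Int by linarith
qed

lemma span_disjoint:
  assumes "graph E" "A \<inter> B \<subseteq> {a}"
  shows "span E A \<inter> span E B = {}"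
proof (rule ccontr)
  assume "span E A \<inter> span E B \<noteq> {}"
  then obtain f where f: "f \<in> E" "f \<subseteq> {a}" using assms(2) by (auto simp: span_def)
  have "card f \<le> card {a}" using f(2) by (intro card_mono) auto
  then show False using graph_card_edge[OF assms(1) f(1)] by simp
qed

lemma span_edge:
  assumes "graph E" "{x, y} \<in> E"
  shows "span E {x, y} = {{x, y}}"
proof -
  have "f = {x, y}" if "f \<in> E" "f \<subseteq> {x, y}" for f
    using graph_card_edge[OF assms(1)] that assms(2)
    by (metis card_subset_eq finite.emptyI finite_insert)
  then show ?thesis using assms(2) by (auto simp: span_def)
qed

lemma card_filter_add_filter_not:
  assumes "finite A"
  shows "card {x\<in>A. P x} + card {x\<in>A. \<not> P x} = card A"
proof -
  have "card ({x\<in>A. P x} \<union> {x\<in>A. \<not> P x}) = card {x\<in>A. P x} + card {x\<in>A. \<not> P x}"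
    using assms by (intro card_Un_disjoint) auto
  moreover have "{x\<in>A. P x} \<union> {x\<in>A. \<not> P x} = A" by blast
  ultimately show ?thesis by simp
qed

lemma card_span_remove_vertex:
  assumes "graph E"
  shows "card (span E (verts E - {u})) + degree E u = card E"
proof -
  have "span E (verts E - {u}) = {f\<in>E. u \<notin> f}"
    using edge_subset_verts by (auto simp: span_def)
  then show ?thesis
    using card_filter_add_filter_not[OF graph_finite[OF assms], of "\<lambda>f. u \<in> f"]
    by (simp add: degree_def)
qed

lemma card_span_remove_non_edge:
  assumes E: "graph E" and vw: "v \<noteq> w" "{v, w} \<notin> E"
  shows "card (span E (verts E - {v, w})) + degree E v + degree E w = card E"
proof -
  have fin: "finite E" using graph_finite[OF E] .
  have "span E (verts E - {v, w}) = {f\<in>E. \<not> (v \<in> f \<or> w \<in> f)}"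
    using edge_subset_verts by (auto simp: span_def)
  moreover have "f = {v, w}" if "f \<in> E" "v \<in> f" "w \<in> f" for f
    using graph_card_edge[OF E that(1)] that(2,3) vw(1) by (auto simp: card_2_iff)
  then have "{f\<in>E. v \<in> f} \<inter> {f\<in>E. w \<in> f} = {}" using vw(2) by blast
  then have "card {f\<in>E. v \<in> f \<or> w \<in> f} = degree E v + degree E w"
    unfolding degree_def using fin card_Un_disjoint[of "{f\<in>E. v \<in> f}" "{f\<in>E. w \<in> f}"]
    by (simp add: Collect_disj_eq conj_disj_distribL)
  ultimately show ?thesis
    using card_filter_add_filter_not[OF fin, of "\<lambda>f. v \<in> f \<or> w \<in> f"] by simp
qed

lemma sum_degree:
  assumes E: "graph E"
  shows "(\<Sum>u\<in>verts E. degree E u) = 2 * card E"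
proof -
  have "(\<Sum>u\<in>verts E. degree E u) = (\<Sum>u\<in>verts E. \<Sum>f\<in>E. if u \<in> f then 1 else 0)"
    unfolding degree_def
    by (intro sum.cong refl) (subst sum.inter_filter[OF graph_finite[OF E], symmetric], simp)
  also have "\<dots> = (\<Sum>f\<in>E. \<Sum>u\<in>verts E. if u \<in> f then 1 else 0)" by (rule sum.swap)
  also have "\<dots> = (\<Sum>f\<in>E. 2)"
  proof (intro sum.cong refl)
    fix f assume f: "f \<in> E"
    have "(\<Sum>u\<in>verts E. if u \<in> f then 1 else 0) = card (verts E \<inter> f)"
      using finite_verts[OF E] by (simp add: sum.If_cases)
    also have "verts E \<inter> f = f" using edge_subset_verts[OF f] by blast
    finally show "(\<Sum>u\<in>verts E. if u \<in> f then 1 else (0::nat)) = 2"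
      using graph_card_edge[OF E f] by simp
  qed
  finally show ?thesis by simp
qed

section \<open>Tight sets of a rigidity circuit\<close>

lemma rigidity_circuit_graph: "rigidity_circuit C \<Longrightarrow> graph C"
  by (simp add: rigidity_circuit_def)

lemma rigidity_circuit_card: "rigidity_circuit C \<Longrightarrow> int (card C) = 2 * int (card (verts C)) - 2"
  by (simp add: rigidity_circuit_def)

lemma rigidity_circuit_sparse:
  "rigidity_circuit C \<Longrightarrow> X \<subseteq> verts C \<Longrightarrow> X \<noteq> verts C \<Longrightarrow> 2 \<le> card X
   \<Longrightarrow> int (card (span C X)) \<le> 2 * int (card X) - 3"
  unfolding rigidity_circuit_def by blast

lemma tight_Un_Int:
  assumes C: "rigidity_circuit C" and XY: "X \<subseteq> verts C" "Y \<subseteq> verts C" "X \<union> Y \<noteq> verts C"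
    and tight: "tight C X" "tight C Y" and I: "2 \<le> card (X \<inter> Y)"
  shows "tight C (X \<union> Y)" "tight C (X \<inter> Y)"
proof -
  have fin: "finite X" "finite Y"
    using XY finite_verts[OF rigidity_circuit_graph[OF C]] finite_subset by auto
  have "card (X \<inter> Y) \<le> card (X \<union> Y)" using fin by (intro card_mono) auto
  then have "int (card (span C (X \<union> Y))) \<le> 2 * int (card (X \<union> Y)) - 3"
    using rigidity_circuit_sparse[OF C] XY I by simp
  moreover have "int (card (span C (X \<inter> Y))) \<le> 2 * int (card (X \<inter> Y)) - 3"
    using rigidity_circuit_sparse[OF C _ _ I] XY by auto
  moreover have "card (span C X) + card (span C Y) \<le> card (span C (X \<union> Y)) + card (span C (X \<inter> Y))"
    using card_span_Un_Int[OF graph_finite[OF rigidity_circuit_graph[OF C]], of X Y] by linarith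
  moreover have "card (X \<union> Y) + card (X \<inter> Y) = card X + card Y"
    using card_Un_Int fin by metis
  ultimately show "tight C (X \<union> Y)" "tight C (X \<inter> Y)"
    using tight unfolding tight_def by linarith+
qed

text \<open>The three shared vertices are counted twice and no edge is shared, so the union
  spans at least 2|X \<union> T1 \<union> T2| - 3 edges.\<close>

lemma tight_Un3:
  assumes C: "rigidity_circuit C"
    and sub: "X \<union> T1 \<union> T2 \<subseteq> verts C" "X \<union> T1 \<union> T2 \<noteq> verts C"
    and tight: "tight C X" "tight C T1" "tight C T2"
    and I: "X \<inter> T1 = {x1}" "X \<inter> T2 = {x2}" "T1 \<inter> T2 = {z}" "x1 \<noteq> x2" "z \<notin> X"
  shows "tight C (X \<union> T1 \<union> T2)"
proof -
  let ?U = "X \<union> T1 \<union> T2"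
  have G: "graph C" using rigidity_circuit_graph[OF C] .
  have finU: "finite ?U" using sub(1) finite_verts[OF G] finite_subset by blast
  then have fin: "finite X" "finite T1" "finite T2" by auto
  have cX1: "card (X \<union> T1) + 1 = card X + card T1" using card_Un_Int[OF fin(1,2)] I(1) by simp
  have "(X \<union> T1) \<inter> T2 = {x2, z}" using I(2,3) by blast
  moreover have "x2 \<noteq> z" using I(2,5) by blast
  ultimately have cU: "card ?U + 2 = card (X \<union> T1) + card T2"
    using card_Un_Int[of "X \<union> T1" T2] fin by simp
  have fs: "finite (span C Z)" for Z using finite_span[OF graph_finite[OF G]] .
  have "span C X \<inter> span C T1 = {}" "span C X \<inter> span C T2 = {}" "span C T1 \<inter> span C T2 = {}"
    using span_disjoint[OF G] I(1-3) by blast+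
  then have "card (span C X \<union> span C T1 \<union> span C T2)
      = card (span C X) + card (span C T1) + card (span C T2)"
    using fs by (simp add: card_Un_disjoint Int_Un_distrib2)
  moreover have "card (span C X \<union> span C T1 \<union> span C T2) \<le> card (span C ?U)"
    by (intro card_mono[OF fs]) (auto simp: span_def)
  moreover have "2 \<le> card ?U"
    using two_le_card[OF finU, of x1 x2] I(1,2,4) by blast
  then have "int (card (span C ?U)) \<le> 2 * int (card ?U) - 3"
    using rigidity_circuit_sparse[OF C sub] by blast
  ultimately show ?thesis using cX1 cU tight unfolding tight_def by linarith
qed

lemma maximal_tight_absorbs:
  assumes C: "rigidity_circuit C" and W: "W \<subseteq> verts C" "W \<noteq> verts C"
    and X: "X \<subseteq> W" "tight C X"
    and max: "\<And>Y. Y \<subseteq> W \<Longrightarrow> 2 \<le> card Y \<Longrightarrow> tight C Y \<Longrightarrow> card Y \<le> card X"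
    and Y: "Y \<subseteq> W" "tight C Y" "2 \<le> card (X \<inter> Y)"
  shows "Y \<subseteq> X"
proof -
  have fin: "finite (X \<union> Y)"
    using X(1) Y(1) W(1) finite_verts[OF rigidity_circuit_graph[OF C]]
    by (meson finite_subset le_sup_iff order_trans)
  have "tight C (X \<union> Y)" using tight_Un_Int(1)[OF C _ _ _ X(2) Y(2,3)] X(1) Y(1) W by blast
  moreover have "card (X \<inter> Y) \<le> card (X \<union> Y)" using fin by (intro card_mono) auto
  ultimately have "card (X \<union> Y) \<le> card X" using max[of "X \<union> Y"] X(1) Y(1,3) by simp
  then have "X = X \<union> Y" using card_seteq[OF fin] by blast
  then show ?thesis by blast
qed

lemma absorbing_Int_singleton:
  assumes "finite X"
    and absorb: "\<And>Y. Y \<subseteq> W \<Longrightarrow> tight C Y \<Longrightarrow> 2 \<le> card (X \<inter> Y) \<Longrightarrow> Y \<subseteq> X"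
    and T: "T \<subseteq> W" "tight C T" "x \<in> X \<inter> T" "\<not> T \<subseteq> X"
  shows "X \<inter> T = {x}"
proof (rule ccontr)
  assume "X \<inter> T \<noteq> {x}"
  then obtain x' where "x' \<in> X \<inter> T" "x' \<noteq> x" using T(3) by blast
  then have "2 \<le> card (X \<inter> T)" using two_le_card[of "X \<inter> T" x x'] assms(1) T(3) by blast
  then show False using absorb[OF T(1,2)] T(4) by blast
qed

text \<open>If a vertex z of W lay outside X, tight sets joining z to two vertices of X would
  meet X and each other in single vertices, so together with X they would form a tight
  set (by tight_Un3) that X does not absorb.\<close>

lemma absorbing_tight_subset_eq:
  assumes C: "rigidity_circuit C" and W: "W \<subseteq> verts C" "W \<noteq> verts C"
    and X: "X \<subseteq> W" "tight C X" "2 \<le> card X"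
    and absorb: "\<And>Y. Y \<subseteq> W \<Longrightarrow> tight C Y \<Longrightarrow> 2 \<le> card (X \<inter> Y) \<Longrightarrow> Y \<subseteq> X"
    and cover: "\<And>x y. x \<in> W \<Longrightarrow> y \<in> W \<Longrightarrow> x \<noteq> y \<Longrightarrow> \<exists>X\<subseteq>W. x \<in> X \<and> y \<in> X \<and> tight C X"
  shows "X = W"
proof -
  have fin: "finite Y" if "Y \<subseteq> W" for Y
    using that W(1) finite_verts[OF rigidity_circuit_graph[OF C]] by (meson finite_subset order_trans)
  have meet_single: "X \<inter> T = {x}" if "T \<subseteq> W" "tight C T" "x \<in> X \<inter> T" "\<not> T \<subseteq> X" for T x
    by (rule absorbing_Int_singleton[OF fin[OF X(1)] _ that]) (rule absorb)
  have "z \<in> X" if z: "z \<in> W" for z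
  proof (rule ccontr)
    assume zX: "z \<notin> X"
    obtain x1 x2 where x12: "x1 \<in> X" "x2 \<in> X" "x1 \<noteq> x2"
      using X(3) card_le_Suc0_iff_eq[OF fin[OF X(1)]] by fastforce
    obtain T1 where T1: "T1 \<subseteq> W" "x1 \<in> T1" "z \<in> T1" "tight C T1"
      using cover[of x1 z] x12 X(1) z zX by blast
    obtain T2 where T2: "T2 \<subseteq> W" "x2 \<in> T2" "z \<in> T2" "tight C T2"
      using cover[of x2 z] x12 X(1) z zX by blast
    have I1: "X \<inter> T1 = {x1}" using meet_single[OF T1(1,4)] T1(2,3) x12(1) zX by blast
    have I2: "X \<inter> T2 = {x2}" using meet_single[OF T2(1,4)] T2(2,3) x12(2) zX by blast
    have I12: "T1 \<inter> T2 = {z}"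
    proof (rule ccontr)
      assume "T1 \<inter> T2 \<noteq> {z}"
      then obtain z' where "z' \<in> T1 \<inter> T2" "z' \<noteq> z" using T1(3) T2(3) by blast
      then have "2 \<le> card (T1 \<inter> T2)" using two_le_card[of "T1 \<inter> T2" z' z] fin T1(1,3) T2(3) by blast
      then have "tight C (T1 \<union> T2)" using tight_Un_Int(1)[OF C _ _ _ T1(4) T2(4)] T1(1) T2(1) W by blast
      moreover have "2 \<le> card (X \<inter> (T1 \<union> T2))"
        using two_le_card[of "X \<inter> (T1 \<union> T2)" x1 x2] fin X(1) x12 T1(2) T2(2) by blast
      ultimately show False using absorb[of "T1 \<union> T2"] T1(1,3) T2(1) zX by blast
    qed
    have U: "X \<union> T1 \<union> T2 \<subseteq> W" using X(1) T1(1) T2(1) by blast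
    then have "tight C (X \<union> T1 \<union> T2)"
      using tight_Un3[OF C _ _ X(2) T1(4) T2(4) I1 I2 I12 x12(3) zX] W by blast
    moreover have "X \<inter> (X \<union> T1 \<union> T2) = X" by blast
    then have "2 \<le> card (X \<inter> (X \<union> T1 \<union> T2))" using X(3) by simp
    ultimately have "X \<union> T1 \<union> T2 \<subseteq> X" using absorb[OF U] by blast
    then show False using T1(3) zX by blast
  qed
  then show ?thesis using X(1) by blast
qed

lemma tight_if_pairs_covered:
  assumes C: "rigidity_circuit C" and W: "W \<subseteq> verts C" "W \<noteq> verts C" "2 \<le> card W"
    and cover: "\<And>x y. x \<in> W \<Longrightarrow> y \<in> W \<Longrightarrow> x \<noteq> y \<Longrightarrow> \<exists>X\<subseteq>W. x \<in> X \<and> y \<in> X \<and> tight C X"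
  shows "tight C W"
proof -
  have finW: "finite W" using W(1) finite_verts[OF rigidity_circuit_graph[OF C]] finite_subset by blast
  define P where "P X \<longleftrightarrow> X \<subseteq> W \<and> 2 \<le> card X \<and> tight C X" for X
  obtain x0 y0 where "x0 \<in> W" "y0 \<in> W" "x0 \<noteq> y0"
    using W(3) card_le_Suc0_iff_eq[OF finW] by fastforce
  then obtain X0 where "X0 \<subseteq> W" "x0 \<in> X0" "y0 \<in> X0" "tight C X0" using cover by blast
  then have "P X0" using two_le_card[OF finite_subset[OF _ finW]] \<open>x0 \<noteq> y0\<close> by (simp add: P_def)
  moreover have "\<forall>Y. P Y \<longrightarrow> card Y < Suc (card W)"
    using card_mono[OF finW] by (auto simp: P_def less_Suc_eq_le)
  ultimately obtain X where PX: "P X" and max: "\<And>Y. P Y \<Longrightarrow> card Y \<le> card X"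
    using Lattices_Big.ex_has_greatest_nat[of P X0 card] by blast
  have X: "X \<subseteq> W" "tight C X" "2 \<le> card X" using PX by (auto simp: P_def)
  have "X = W"
    using absorbing_tight_subset_eq[OF C W(1,2) X maximal_tight_absorbs[OF C W(1,2) X(1,2)] cover]
      max unfolding P_def by blast
  then show ?thesis using X(2) by simp
qed

lemma obtain_minimal_tight:
  assumes "finite X0" "tight C X0" "x \<in> X0" "y \<in> X0"
  obtains T where "T \<subseteq> X0" "x \<in> T" "y \<in> T" "tight C T"
    "\<And>T'. T' \<subset> T \<Longrightarrow> x \<in> T' \<Longrightarrow> y \<in> T' \<Longrightarrow> \<not> tight C T'"
proof -
  obtain T where T: "T \<subseteq> X0 \<and> x \<in> T \<and> y \<in> T \<and> tight C T"
    and min: "\<And>T'. T' \<subseteq> X0 \<and> x \<in> T' \<and> y \<in> T' \<and> tight C T' \<Longrightarrow> card T \<le> card T'"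
    using ex_has_least_nat[of "\<lambda>T. T \<subseteq> X0 \<and> x \<in> T \<and> y \<in> T \<and> tight C T" X0 card] assms
    by blast
  have finT: "finite T" using T assms(1) finite_subset by blast
  have "\<not> tight C T'" if T': "T' \<subset> T" "x \<in> T'" "y \<in> T'" for T'
  proof
    assume "tight C T'"
    then have "card T \<le> card T'" using min[of T'] T T' by blast
    then show False using psubset_card_mono[OF finT T'(1)] by simp
  qed
  then show ?thesis using that T by blast
qed

lemma tight_vertex_in_verts_span:
  assumes C: "rigidity_circuit C" and T: "T \<subseteq> verts C" "T \<noteq> verts C" "tight C T"
    and t: "t \<in> T" "2 \<le> card (T - {t})"
  shows "t \<in> verts (span C T)"
proof (rule ccontr)
  assume nt: "t \<notin> verts (span C T)"
  have G: "graph C" using rigidity_circuit_graph[OF C] .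
  have "span C T \<subseteq> span C (T - {t})"
  proof
    fix f assume f: "f \<in> span C T"
    then have "t \<notin> f" using nt by (auto simp: verts_def)
    then show "f \<in> span C (T - {t})" using f by (auto simp: span_def)
  qed
  then have "card (span C T) \<le> card (span C (T - {t}))"
    using finite_span[OF graph_finite[OF G]] by (rule card_mono[rotated])
  moreover have "finite T" using T(1) finite_verts[OF G] finite_subset by blast
  then have "Suc (card (T - {t})) = card T" by (rule card_Suc_Diff1[OF _ t(1)])
  moreover have "T - {t} \<noteq> verts C" using T(1,2) by blast
  then have "int (card (span C (T - {t}))) \<le> 2 * int (card (T - {t})) - 3"
    using T(1) by (intro rigidity_circuit_sparse[OF C _ _ t(2)]) auto
  ultimately show False using T(3) unfolding tight_def by linarith
qed

text \<open>Proper subsets of T containing x and y are not tight, so they have room for the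
  extra edge xy.\<close>

lemma minimal_tight_insert_circuit:
  assumes C: "rigidity_circuit C" and T: "T \<subseteq> verts C" "T \<noteq> verts C" "tight C T"
    and xy: "x \<in> T" "y \<in> T" "x \<noteq> y" "{x, y} \<notin> C"
    and min: "\<And>T'. T' \<subset> T \<Longrightarrow> x \<in> T' \<Longrightarrow> y \<in> T' \<Longrightarrow> \<not> tight C T'"
  shows "rigidity_circuit (insert {x, y} (span C T))" "verts (insert {x, y} (span C T)) = T"
proof -
  let ?A = "insert {x, y} (span C T)"
  have G: "graph C" using rigidity_circuit_graph[OF C] .
  have fin: "finite C" "finite T" using graph_finite[OF G] T(1) finite_verts[OF G] finite_subset by auto
  have "verts (span C T) \<subseteq> T" by (auto simp: verts_def span_def)
  moreover have "t \<in> verts (span C T)" if "t \<in> T" "t \<noteq> x" "t \<noteq> y" for t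
    using tight_vertex_in_verts_span[OF C T that(1)] two_le_card[of "T - {t}" x y] that xy fin(2)
    by blast
  ultimately show vA: "verts ?A = T" using xy(1,2) by (auto simp: verts_def)
  have "graph ?A" using G xy(3) span_subset[of C T] finite_span[OF fin(1)]
    unfolding graph_def by (auto simp: card_insert_if)
  moreover have "int (card ?A) = 2 * int (card T) - 2"
    using T(3) xy(4) span_subset finite_span[OF fin(1)] unfolding tight_def by (auto simp: card_insert_if)
  moreover have "int (card (span ?A V')) \<le> 2 * int (card V') - 3" if V': "V' \<subset> T" "2 \<le> card V'" for V'
  proof -
    have sparse: "int (card (span C V')) \<le> 2 * int (card V') - 3"
      using rigidity_circuit_sparse[OF C _ _ V'(2)] V'(1) T by auto
    show ?thesis
    proof (cases "x \<in> V' \<and> y \<in> V'")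
      case True
      have "span ?A V' \<subseteq> insert {x, y} (span C V')" by (auto simp: span_def)
      then have "card (span ?A V') \<le> card (insert {x, y} (span C V'))"
        using finite_span[OF fin(1)] by (intro card_mono) auto
      also have "\<dots> \<le> card (span C V') + 1" using finite_span[OF fin(1)] by (simp add: card_insert_if)
      finally show ?thesis using min[OF V'(1)] True sparse unfolding tight_def by linarith
    next
      case False
      moreover have "V' \<subseteq> T" using V'(1) by blast
      ultimately have "span ?A V' = span C V'" by (auto simp: span_def)
      then show ?thesis using sparse by simp
    qed
  qed
  ultimately show "rigidity_circuit ?A" unfolding rigidity_circuit_def vA by blast
qed

section \<open>Small circuits and vertices of degree 3\<close>

lemma card_2_subsets: "finite V \<Longrightarrow> card {e. e \<subseteq> V \<and> card e = 2} = card V * (card V - 1) div 2"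
  using n_subsets[of V 2] choose_two by simp

lemma finite_2_subsets: "finite V \<Longrightarrow> finite {e. e \<subseteq> V \<and> card e = 2}"
  by (rule finite_subset[of _ "Pow V"]) auto

lemma graph_subset_2_subsets: "graph E \<Longrightarrow> E \<subseteq> {e. e \<subseteq> verts E \<and> card e = 2}"
  using edge_subset_verts graph_card_edge by blast

lemma card_le_2_subsets:
  assumes G: "graph E"
  shows "card E \<le> card (verts E) * (card (verts E) - 1) div 2"
proof -
  have "card E \<le> card {e. e \<subseteq> verts E \<and> card e = 2}"
    by (rule card_mono[OF finite_2_subsets[OF finite_verts[OF G]] graph_subset_2_subsets[OF G]])
  then show ?thesis using card_2_subsets[OF finite_verts[OF G]] by simp
qed

lemma rigidity_circuit_card_verts_ge_4:
  assumes C: "rigidity_circuit C"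
  shows "4 \<le> card (verts C)"
proof (rule ccontr)
  let ?n = "card (verts C)"
  have G: "graph C" using rigidity_circuit_graph[OF C] .
  have le: "card C \<le> ?n * (?n - 1) div 2" using card_le_2_subsets[OF G] .
  have eq: "int (card C) = 2 * int ?n - 2" using rigidity_circuit_card[OF C] .
  have empty: "card C = 0 \<Longrightarrow> ?n = 0" using graph_finite[OF G] by (simp add: verts_def)
  assume "\<not> 4 \<le> ?n"
  then have "?n = 0 \<or> ?n = 1 \<or> ?n = 2 \<or> ?n = 3" by arith
  then show False using le eq empty by auto
qed

lemma rigidity_circuit_4_is_K4:
  assumes C: "rigidity_circuit C" and n: "card (verts C) = 4"
  shows "is_K4 C"
proof -
  have G: "graph C" using rigidity_circuit_graph[OF C] .
  have "card C = 6" using rigidity_circuit_card[OF C] n by simp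
  then have "C = {e. e \<subseteq> verts C \<and> card e = 2}"
    using card_subset_eq[OF finite_2_subsets[OF finite_verts[OF G]] graph_subset_2_subsets[OF G]]
      card_2_subsets[OF finite_verts[OF G]] n by simp
  also have "\<dots> = {{x, y} | x y. x \<in> verts C \<and> y \<in> verts C \<and> x \<noteq> y}"
    by (auto simp: card_2_iff)
  finally show ?thesis using n unfolding is_K4_def by blast
qed

lemma rigidity_circuit_degree_ge_3:
  assumes C: "rigidity_circuit C" and u: "u \<in> verts C"
  shows "3 \<le> degree C u"
proof -
  have fin: "finite (verts C)" using finite_verts[OF rigidity_circuit_graph[OF C]] .
  have card: "Suc (card (verts C - {u})) = card (verts C)" using card_Suc_Diff1[OF fin u] .
  then have "2 \<le> card (verts C - {u})" using rigidity_circuit_card_verts_ge_4[OF C] by linarith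
  moreover have "verts C - {u} \<noteq> verts C" using u by blast
  ultimately have "int (card (span C (verts C - {u}))) \<le> 2 * int (card (verts C - {u})) - 3"
    using rigidity_circuit_sparse[OF C Diff_subset] by blast
  then show ?thesis
    using card_span_remove_vertex[OF rigidity_circuit_graph[OF C], of u] rigidity_circuit_card[OF C]
      card by linarith
qed

text \<open>Since the degrees sum to 4n - 4 and are all at least 3, at least four are exactly 3.\<close>

lemma card_degree_3_ge_4:
  assumes C: "rigidity_circuit C"
  shows "4 \<le> card {u\<in>verts C. degree C u = 3}"
proof -
  let ?V = "verts C"
  have G: "graph C" using rigidity_circuit_graph[OF C] .
  have "4 * card ?V = (\<Sum>u\<in>?V. 4)" by simp
  also have "\<dots> \<le> (\<Sum>u\<in>?V. degree C u + (if degree C u = 3 then 1 else 0))"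
  proof (rule sum_mono)
    fix u assume "u \<in> ?V"
    then show "4 \<le> degree C u + (if degree C u = 3 then 1 else 0)"
      using rigidity_circuit_degree_ge_3[OF C, of u] by simp
  qed
  also have "\<dots> = 2 * card C + card {u\<in>?V. degree C u = 3}"
    using sum_degree[OF G] sum.inter_filter[OF finite_verts[OF G], of "\<lambda>_. 1::nat", symmetric]
    by (simp add: sum.distrib)
  finally show ?thesis using rigidity_circuit_card[OF C] by linarith
qed

text \<open>Four pairwise adjacent vertices would span 6 = 2 \<cdot> 4 - 2 edges.\<close>

lemma nonadjacent_degree_3:
  assumes C: "rigidity_circuit C" and n: "5 \<le> card (verts C)"
  shows "\<exists>v w. v \<in> verts C \<and> w \<in> verts C \<and> v \<noteq> w \<and> {v, w} \<notin> C \<and>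
    degree C v = 3 \<and> degree C w = 3"
proof (rule ccontr)
  assume none: "\<not> ?thesis"
  obtain Q where Q: "Q \<subseteq> {u\<in>verts C. degree C u = 3}" "card Q = 4"
    using obtain_subset_with_card_n card_degree_3_ge_4[OF C] by metis
  have fin: "finite Q" using Q(2) by (metis card.infinite zero_neq_numeral)
  have QV: "Q \<subseteq> verts C" using Q(1) by blast
  have "{x, y} \<in> span C Q" if "x \<in> Q" "y \<in> Q" "x \<noteq> y" for x y
    using none that Q(1) by (auto simp: span_def)
  then have "{e. e \<subseteq> Q \<and> card e = 2} \<subseteq> span C Q" by (auto simp: card_2_iff)
  then have "card {e. e \<subseteq> Q \<and> card e = 2} \<le> card (span C Q)"
    by (intro card_mono finite_span graph_finite rigidity_circuit_graph C)
  then have "6 \<le> card (span C Q)" using card_2_subsets[OF fin] Q(2) by simp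
  moreover have "Q \<noteq> verts C" using Q(2) n by auto
  ultimately show False using rigidity_circuit_sparse[OF C QV] Q(2) by simp
qed

lemma tight_remove_degree_3:
  assumes C: "rigidity_circuit C" and u: "u \<in> verts C" "degree C u = 3"
  shows "tight C (verts C - {u})"
  using card_span_remove_vertex[OF rigidity_circuit_graph[OF C], of u] rigidity_circuit_card[OF C]
    card_Diff_singleton[OF u(1)] rigidity_circuit_card_verts_ge_4[OF C] u(2)
  unfolding tight_def by linarith

lemma not_tight_remove_degree_3_pair:
  assumes C: "rigidity_circuit C" and vw: "v \<in> verts C" "w \<in> verts C" "v \<noteq> w" "{v, w} \<notin> C"
    and deg: "degree C v = 3" "degree C w = 3"
  shows "\<not> tight C (verts C - {v, w})"
proof -
  have "card (verts C - {v, w}) = card (verts C) - 2"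
    using vw finite_verts[OF rigidity_circuit_graph[OF C]] by (simp add: card_Diff_subset)
  then show ?thesis
    using card_span_remove_non_edge[OF rigidity_circuit_graph[OF C] vw(3,4)] deg
      rigidity_circuit_card[OF C] rigidity_circuit_card_verts_ge_4[OF C]
    unfolding tight_def by linarith
qed

section \<open>Splitting a circuit into a combinatorial resultant\<close>

lemma tight_spans_cover:
  assumes C: "rigidity_circuit C" and TS: "T \<subseteq> verts C" "S \<subseteq> verts C" "T \<union> S = verts C"
    and tight: "tight C T" "tight C S"
    and I: "2 \<le> card (T \<inter> S)" "\<not> tight C (T \<inter> S)"
  shows "span C T \<union> span C S = C"
proof -
  let ?R = "span C (T \<union> S) - (span C T \<union> span C S)"
  have G: "graph C" using rigidity_circuit_graph[OF C] .
  have fin: "finite T" "finite S"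
    using finite_subset[OF TS(1)] finite_subset[OF TS(2)] finite_verts[OF G] by auto
  have ne: "T \<inter> S \<noteq> verts C"
  proof
    assume "T \<inter> S = verts C"
    then have "T \<inter> S = T" using TS(1) by blast
    then show False using I(2) tight(1) by simp
  qed
  have "int (card (span C (T \<inter> S))) \<le> 2 * int (card (T \<inter> S)) - 3"
    by (rule rigidity_circuit_sparse[OF C _ ne I(1)]) (use TS(1) in blast)
  then have "int (card (span C (T \<inter> S))) \<le> 2 * int (card (T \<inter> S)) - 4"
    using I(2) unfolding tight_def by linarith
  moreover have "card (span C T) + card (span C S) + card ?R = card C + card (span C (T \<inter> S))"
    using card_span_Un_Int[OF graph_finite[OF G], of T S] unfolding TS(3) span_verts .
  moreover have "card T + card S = card (verts C) + card (T \<inter> S)"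
    using card_Un_Int[OF fin] unfolding TS(3) .
  ultimately have "card ?R = 0"
    using tight rigidity_circuit_card[OF C] unfolding tight_def by linarith
  then have "?R = {}" using finite_span[OF graph_finite[OF G]] by simp
  then show ?thesis using span_subset[of C T] span_subset[of C S] unfolding TS(3) span_verts by blast
qed

lemma resultant_of_minimal_tight_sets:
  assumes C: "rigidity_circuit C" and xy: "x \<noteq> y" "{x, y} \<notin> C" and TS: "T \<noteq> S"
    and T: "T \<subseteq> verts C" "T \<noteq> verts C" "x \<in> T" "y \<in> T" "tight C T"
      "\<And>T'. T' \<subset> T \<Longrightarrow> x \<in> T' \<Longrightarrow> y \<in> T' \<Longrightarrow> \<not> tight C T'"
    and S: "S \<subseteq> verts C" "S \<noteq> verts C" "x \<in> S" "y \<in> S" "tight C S"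
      "\<And>S'. S' \<subset> S \<Longrightarrow> x \<in> S' \<Longrightarrow> y \<in> S' \<Longrightarrow> \<not> tight C S'"
  defines "A \<equiv> insert {x, y} (span C T)" and "B \<equiv> insert {x, y} (span C S)"
  shows "rigidity_circuit A" "rigidity_circuit B" "A \<noteq> B" "{x, y} \<in> A \<inter> B"
    "(verts C, C) = CR A B {x, y}"
    "card (verts A) < card (verts C)" "card (verts B) < card (verts C)"
proof -
  have fin: "finite (verts C)" using finite_verts[OF rigidity_circuit_graph[OF C]] .
  show "rigidity_circuit A" "rigidity_circuit B"
    using minimal_tight_insert_circuit(1)[OF C T(1,2,5) T(3,4) xy T(6)]
      minimal_tight_insert_circuit(1)[OF C S(1,2,5) S(3,4) xy S(6)]
    unfolding A_def B_def by blast+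
  have vAB: "verts A = T" "verts B = S"
    using minimal_tight_insert_circuit(2)[OF C T(1,2,5) T(3,4) xy T(6)]
      minimal_tight_insert_circuit(2)[OF C S(1,2,5) S(3,4) xy S(6)]
    unfolding A_def B_def by blast+
  show "A \<noteq> B" using vAB TS by auto
  show "{x, y} \<in> A \<inter> B" by (simp add: A_def B_def)
  have "T \<inter> S \<subset> T \<or> T \<inter> S \<subset> S" using TS by blast
  then have nI: "\<not> tight C (T \<inter> S)" using T(3,4,6) S(3,4,6) by blast
  have I2: "2 \<le> card (T \<inter> S)" using two_le_card[of "T \<inter> S" x y] T S xy(1) fin
    by (auto simp: finite_subset)
  have "T \<union> S = verts C" using tight_Un_Int(2)[OF C T(1) S(1) _ T(5) S(5) I2] nI by blast
  moreover have "span C T \<union> span C S = C"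
    using tight_spans_cover[OF C T(1) S(1) calculation T(5) S(5) I2 nI] .
  ultimately show "(verts C, C) = CR A B {x, y}"
    using vAB xy(2) unfolding CR_def A_def B_def by auto
  show "card (verts A) < card (verts C)" "card (verts B) < card (verts C)"
    using vAB T(1,2) S(1,2) fin by (auto intro: psubset_card_mono)
qed

lemma obtain_uncovered_non_edge:
  assumes C: "rigidity_circuit C" and n: "5 \<le> card (verts C)"
    and vw: "v \<in> verts C" "w \<in> verts C" "v \<noteq> w" "{v, w} \<notin> C" "degree C v = 3" "degree C w = 3"
  obtains x y where "x \<in> verts C - {v, w}" "y \<in> verts C - {v, w}" "x \<noteq> y" "{x, y} \<notin> C"
    "\<not> (\<exists>X\<subseteq>verts C - {v, w}. x \<in> X \<and> y \<in> X \<and> tight C X)"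
proof -
  let ?W = "verts C - {v, w}"
  have W: "?W \<subseteq> verts C" "?W \<noteq> verts C" using vw(1) by blast+
  have "2 \<le> card ?W"
    using n vw finite_verts[OF rigidity_circuit_graph[OF C]] by (simp add: card_Diff_subset)
  obtain x y where xy: "x \<in> ?W" "y \<in> ?W" "x \<noteq> y"
    and uncovered: "\<not> (\<exists>X\<subseteq>?W. x \<in> X \<and> y \<in> X \<and> tight C X)"
  proof (rule ccontr)
    assume "\<not> thesis"
    then have "tight C ?W" using that by (intro tight_if_pairs_covered[OF C W \<open>2 \<le> card ?W\<close>]) blast
    then show False using not_tight_remove_degree_3_pair[OF C vw] by contradiction
  qed
  have "{x, y} \<notin> C"
  proof
    assume "{x, y} \<in> C"
    then have "tight C {x, y}" using span_edge[OF rigidity_circuit_graph[OF C]] xy(3)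
      unfolding tight_def by simp
    moreover have "{x, y} \<subseteq> ?W" using xy(1,2) by blast
    ultimately show False using uncovered by blast
  qed
  then show ?thesis using that xy uncovered by blast
qed

lemma rigidity_circuit_resultant_decomposition:
  assumes C: "rigidity_circuit C" and n: "5 \<le> card (verts C)"
  obtains A B e where "rigidity_circuit A" "rigidity_circuit B" "A \<noteq> B" "e \<in> A \<inter> B"
    "(verts C, C) = CR A B e" "card (verts A) < card (verts C)" "card (verts B) < card (verts C)"
proof -
  let ?V = "verts C"
  have fin: "finite ?V" using finite_verts[OF rigidity_circuit_graph[OF C]] .
  obtain v w where vw: "v \<in> ?V" "w \<in> ?V" "v \<noteq> w" "{v, w} \<notin> C" "degree C v = 3" "degree C w = 3"
    using nonadjacent_degree_3[OF C n] by blast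
  obtain x y where xy: "x \<in> ?V - {v, w}" "y \<in> ?V - {v, w}" "x \<noteq> y" "{x, y} \<notin> C"
    and uncovered: "\<not> (\<exists>X\<subseteq>?V - {v, w}. x \<in> X \<and> y \<in> X \<and> tight C X)"
    by (rule obtain_uncovered_non_edge[OF C n vw])
  have xyV: "x \<in> ?V - {v}" "y \<in> ?V - {v}" "x \<in> ?V - {w}" "y \<in> ?V - {w}"
    using xy(1,2) by auto
  obtain T where T: "T \<subseteq> ?V - {v}" "x \<in> T" "y \<in> T" "tight C T"
      "\<And>T'. T' \<subset> T \<Longrightarrow> x \<in> T' \<Longrightarrow> y \<in> T' \<Longrightarrow> \<not> tight C T'"
    by (rule obtain_minimal_tight[OF finite_Diff[OF fin] tight_remove_degree_3[OF C vw(1,5)] xyV(1,2)]) blast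
  obtain S where S: "S \<subseteq> ?V - {w}" "x \<in> S" "y \<in> S" "tight C S"
      "\<And>S'. S' \<subset> S \<Longrightarrow> x \<in> S' \<Longrightarrow> y \<in> S' \<Longrightarrow> \<not> tight C S'"
    by (rule obtain_minimal_tight[OF finite_Diff[OF fin] tight_remove_degree_3[OF C vw(2,6)] xyV(3,4)]) blast
  have "w \<in> T"
  proof (rule ccontr)
    assume "w \<notin> T"
    then have "T \<subseteq> ?V - {v, w}" using T(1) by blast
    then show False using uncovered T(2-4) by blast
  qed
  then have TS: "T \<noteq> S" using S(1) by blast
  have TV: "T \<subseteq> ?V" "T \<noteq> ?V" and SV: "S \<subseteq> ?V" "S \<noteq> ?V" using T(1) S(1) vw(1,2) by auto
  show ?thesis
    by (rule that[OF resultant_of_minimal_tight_sets[OF C xy(3,4) TS TV T(2-5) SV S(2-5)]])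
qed

lemma exists_resultant_tree:
  assumes "rigidity_circuit C"
  shows "\<exists>T. root T = C \<and> (\<forall>n l. card (verts C) + l \<le> n \<longrightarrow> resultant_tree n l T)"
  using assms
proof (induction "card (verts C)" arbitrary: C rule: less_induct)
  case less
  note C = less.prems
  show ?case
  proof (cases "card (verts C) = 4")
    case True
    then show ?thesis using C rigidity_circuit_4_is_K4[OF C True] by (intro exI[of _ "Leaf C"]) simp
  next
    case False
    then have "5 \<le> card (verts C)" using rigidity_circuit_card_verts_ge_4[OF C] by simp
    then obtain A B e where AB: "rigidity_circuit A" "rigidity_circuit B" "A \<noteq> B" "e \<in> A \<inter> B"
      "(verts C, C) = CR A B e" "card (verts A) < card (verts C)" "card (verts B) < card (verts C)"
      using rigidity_circuit_resultant_decomposition[OF C] by blast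
    obtain TA where TA: "root TA = A" "\<forall>n l. card (verts A) + l \<le> n \<longrightarrow> resultant_tree n l TA"
      using less.hyps[OF AB(6) AB(1)] by blast
    obtain TB where TB: "root TB = B" "\<forall>n l. card (verts B) + l \<le> n \<longrightarrow> resultant_tree n l TB"
      using less.hyps[OF AB(7) AB(2)] by blast
    have "resultant_tree n l (Node C TA TB)" if "card (verts C) + l \<le> n" for n l
      using TA TB AB C that by auto
    then show ?thesis by (intro exI[of _ "Node C TA TB"]) simp
  qed
qed

theorem theorem1:
  fixes C :: "'a set set"
  assumes "rigidity_circuit C"
  shows "\<exists>T. root T = C \<and> resultant_tree (card (verts C)) 0 T"
  using exists_resultant_tree[OF assms] by fastforce

end
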